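(* Let $X_1, X_2, \ldots$ be independent random variables, each exponentially distributed with rate $\lambda>0$, fix $r>0$, and let $S_n=\sum_{k=1}^n X_k$. Let $n\ge 1$ be an integer, $j\in\{0,1,2,\ldots\}$, and $t$ with $jr\le t<(j+1)r$. Then \[ \Pr\Big(S_n\le t,\ \bigcap_{k=1}^n \{X_k\le r\}\Big)=e^{-\lambda t}\sum_{i=0}^{j}(-1)^i\binom{n}{i}\sum_{k=n}^{\infty}\frac{(\lambda(t-ir))^k}{k!}. \]
   Context: Here $\binom{n}{i}=0$ when $i>n$. The exponential distribution with rate $\lambda$ has density $\lambda e^{-\lambda x}$ for $x>0$ and $0$ otherwise. *)

theory Defs
  imports "HOL-Probability.Probability"
begin

end

theory Submission
  imports Defs
begin

text \<open>By independence the probability is the measure of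
  \<open>{x. x\<^sub>1 + \<dots> + x\<^sub>n \<le> t, x\<^sub>k \<le> r}\<close> under the \<open>n\<close>-fold product of the exponential law.
  Since the joint density \<open>l^n exp (- l (x\<^sub>1 + \<dots> + x\<^sub>n))\<close> depends only on the sum, on the
  event \<open>{X\<^sub>k \<le> r for all k}\<close> the sum \<open>S\<^sub>n\<close> has density \<open>l^n exp (- l z) B\<^sub>n(z)\<close>, where
  \<open>B\<^sub>n(z) = (1/(n-1)!) \<Sum>\<^sub>i (-1)^i (n choose i) (z - i r)\<^sub>+^(n-1)\<close> is the \<open>n\<close>-fold convolution
  of the indicator of \<open>[0, r)\<close>; this follows by induction from
  \<open>B\<^sub>n\<^sub>+\<^sub>1(z) = \<integral>\<^sub>0\<^sup>r B\<^sub>n(z - y) dy\<close>.  Integrating term by term gives shifted Erlang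
  distribution functions, \<open>exp (- l i r) F(t - i r) = exp (- l t) \<Sum>\<^sub>k\<^sub>\<ge>\<^sub>n (l (t - i r))^k / k!\<close>,
  and the terms with \<open>i > j\<close> vanish because then \<open>t < i r\<close>.\<close>

definition trunc_power :: "nat \<Rightarrow> real \<Rightarrow> real" where
  "trunc_power m s = (if s < 0 then 0 else s ^ m)"

lemma trunc_power_Suc_eq_max: "trunc_power (Suc m) s = max s 0 ^ Suc m"
  by (simp add: trunc_power_def max_def)

lemma borel_measurable_trunc_power[measurable]: "trunc_power m \<in> borel_measurable borel"
  unfolding trunc_power_def[abs_def] by measurable

lemma has_real_derivative_trunc_power:
  assumes "s \<noteq> 0"
  shows "(trunc_power (Suc m) has_real_derivative real (Suc m) * trunc_power m s) (at s)"
proof (cases "s < 0")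
  case True
  have "((\<lambda>_. 0) has_real_derivative real (Suc m) * trunc_power m s) (at s)"
    using True by (simp add: trunc_power_def)
  then show ?thesis
    by (rule has_field_derivative_transform_within_open[where S="{..<0}"])
       (use True in \<open>auto simp: trunc_power_def\<close>)
next
  case False
  with assms have "s > 0" by auto
  have "((\<lambda>x. x ^ Suc m) has_real_derivative real (Suc m) * trunc_power m s) (at s)"
    using \<open>s > 0\<close> DERIV_pow[of "Suc m" s] by (simp add: trunc_power_def)
  then show ?thesis
    by (rule has_field_derivative_transform_within_open[where S="{0<..}"])
       (use \<open>s > 0\<close> in \<open>auto simp: trunc_power_def\<close>)
qed

lemma has_integral_trunc_power_reflect:
  assumes "0 \<le> r"
  shows "((\<lambda>y. trunc_power m (a - y)) has_integral
           (trunc_power (Suc m) a - trunc_power (Suc m) (a - r)) / real (Suc m)) {0..r}"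
proof -
  let ?G = "\<lambda>y. - trunc_power (Suc m) (a - y) / real (Suc m)"
  have "((\<lambda>y. trunc_power m (a - y)) has_integral ?G r - ?G 0) {0..r}"
  proof (rule fundamental_theorem_of_calculus_strong[where S="{a}"])
    show "continuous_on {0..r} ?G"
      unfolding trunc_power_Suc_eq_max by (intro continuous_intros) auto
    fix y assume "y \<in> {0..r} - {a}"
    then have "((\<lambda>y. trunc_power (Suc m) (a - y)) has_real_derivative
                 real (Suc m) * trunc_power m (a - y) * -1) (at y)"
      by (intro DERIV_chain2[OF has_real_derivative_trunc_power]) (auto intro!: derivative_eq_intros)
    then have "(?G has_real_derivative trunc_power m (a - y)) (at y)"
      by (auto intro!: derivative_eq_intros simp del: of_nat_Suc)
    then show "(?G has_vector_derivative trunc_power m (a - y)) (at y)"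
      by (simp add: has_real_derivative_iff_has_vector_derivative)
  qed (use assms in auto)
  then show ?thesis
    by (simp add: diff_divide_distrib)
qed

lemma alternating_binomial_sum_differences:
  fixes a :: "nat \<Rightarrow> 'a::comm_ring_1"
  shows "(\<Sum>i\<le>n. (-1)^i * of_nat (n choose i) * (a i - a (Suc i))) =
         (\<Sum>i\<le>Suc n. (-1)^i * of_nat (Suc n choose i) * a i)"
proof -
  let ?g = "\<lambda>i. (-1)^i * of_nat (n choose i) * a i"
  have "(\<Sum>i\<le>n. ?g i) = (\<Sum>i\<le>Suc n. ?g i)"
    by (simp add: binomial_eq_0)
  also have "\<dots> = ?g 0 + (\<Sum>i\<le>n. ?g (Suc i))"
    by (rule sum.atMost_Suc_shift)
  finally have shift: "(\<Sum>i\<le>n. ?g i) = ?g 0 + (\<Sum>i\<le>n. ?g (Suc i))" .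
  have "(\<Sum>i\<le>n. (-1)^i * of_nat (n choose i) * (a i - a (Suc i)))
      = (\<Sum>i\<le>n. ?g i) - (\<Sum>i\<le>n. (-1)^i * of_nat (n choose i) * a (Suc i))"
    by (simp add: sum_subtractf right_diff_distrib)
  also have "\<dots> = a 0 + (\<Sum>i\<le>n. (-1)^(Suc i) * of_nat (Suc n choose Suc i) * a (Suc i))"
    unfolding shift by (simp add: sum_subtractf[symmetric] sum.distrib[symmetric] algebra_simps)
  also have "\<dots> = (\<Sum>i\<le>Suc n. (-1)^i * of_nat (Suc n choose i) * a i)"
    by (subst sum.atMost_Suc_shift) simp
  finally show ?thesis .
qed

definition bspline :: "real \<Rightarrow> nat \<Rightarrow> real \<Rightarrow> real" where
  "bspline r n z =
     (\<Sum>i\<le>n. (-1)^i * real (n choose i) * trunc_power (n - 1) (z - real i * r)) / fact (n - 1)"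

lemma borel_measurable_bspline[measurable]: "bspline r n \<in> borel_measurable borel"
  unfolding bspline_def[abs_def] by measurable

lemma bspline_one: "0 \<le> r \<Longrightarrow> bspline r 1 z = indicator {0..<r} z"
  by (simp add: bspline_def trunc_power_def indicator_def)

lemma has_integral_bspline:
  assumes "0 \<le> r" "n \<ge> 1"
  shows "((\<lambda>y. bspline r n (z - y)) has_integral bspline r (Suc n) z) {0..r}"
proof -
  obtain m where n: "n = Suc m" using assms by (cases n) auto
  define a where "a i = trunc_power (Suc m) (z - real i * r)" for i
  have "((\<lambda>y. (\<Sum>i\<le>Suc m. (-1)^i * real (Suc m choose i) * trunc_power m (z - real i * r - y))
               / fact m)
     has_integral (\<Sum>i\<le>Suc m. (-1)^i * real (Suc m choose i) * ((a i - a (Suc i)) / real (Suc m)))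
               / fact m) {0..r}"
    unfolding a_def
    by (intro has_integral_divide has_integral_sum has_integral_mult_right finite_atMost
          has_integral_trunc_power_reflect[THEN has_integral_eq_rhs] assms)
       (simp add: algebra_simps)
  also have "(\<Sum>i\<le>Suc m. (-1)^i * real (Suc m choose i) * ((a i - a (Suc i)) / real (Suc m)))
      = (\<Sum>i\<le>Suc m. (-1)^i * real (Suc m choose i) * (a i - a (Suc i))) / real (Suc m)"
    by (simp only: sum_divide_distrib times_divide_eq_right)
  also have "\<dots> = (\<Sum>i\<le>Suc (Suc m). (-1)^i * real (Suc (Suc m) choose i) * a i) / real (Suc m)"
    by (simp only: alternating_binomial_sum_differences)
  finally show ?thesis
    by (simp add: bspline_def n a_def algebra_simps)
qed

lemma bspline_nonneg:
  assumes "0 \<le> r" "n \<ge> 1"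
  shows "0 \<le> bspline r n z"
  using assms(2)
proof (induction n arbitrary: z rule: dec_induct)
  case base
  show ?case using assms(1) bspline_one[of r z] by simp
next
  case (step n)
  show ?case
    by (rule has_integral_nonneg[OF has_integral_bspline[OF assms(1) step(1)]]) (rule step.IH)
qed

definition bounded_sum_event :: "real \<Rightarrow> nat \<Rightarrow> real \<Rightarrow> (nat \<Rightarrow> real) set" where
  "bounded_sum_event r n t =
     {x \<in> {1..n} \<rightarrow>\<^sub>E UNIV. (\<Sum>k=1..n. x k) \<le> t \<and> (\<forall>k\<in>{1..n}. x k \<le> r)}"

lemma bounded_sum_event_in_sets:
  assumes "sets D = sets (borel :: real measure)"
  shows "bounded_sum_event r n t \<in> sets (\<Pi>\<^sub>M k\<in>{1..n}. D)"
proof -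
  have "sets (\<Pi>\<^sub>M k\<in>{1..n}. D) = sets (\<Pi>\<^sub>M k\<in>{1..n}. (borel :: real measure))"
    using assms by (intro sets_PiM_cong) auto
  moreover have "bounded_sum_event r n t = {x \<in> space (\<Pi>\<^sub>M k\<in>{1..n}. (borel :: real measure)).
                   (\<Sum>k=1..n. x k) \<le> t \<and> (\<forall>k\<in>{1..n}. x k \<le> r)}"
    by (simp add: bounded_sum_event_def space_PiM)
  moreover have "\<dots> \<in> sets (\<Pi>\<^sub>M k\<in>{1..n}. (borel :: real measure))"
    by measurable
  ultimately show ?thesis
    by simp
qed

lemma fun_upd_in_bounded_sum_event_Suc:
  assumes "x \<in> {1..n} \<rightarrow>\<^sub>E UNIV"
  shows "x(Suc n := y) \<in> bounded_sum_event r (Suc n) t \<longleftrightarrow>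
           y \<le> r \<and> x \<in> bounded_sum_event r n (t - y)"
proof -
  have "(\<Sum>k=1..n. (x(Suc n := y)) k) = (\<Sum>k=1..n. x k)"
    by (rule sum.cong) auto
  then have "(\<Sum>k=1..Suc n. (x(Suc n := y)) k) = (\<Sum>k=1..n. x k) + y"
    by simp
  moreover have "x(Suc n := y) \<in> {1..Suc n} \<rightarrow>\<^sub>E UNIV"
    using assms by (auto simp: PiE_def extensional_def)
  moreover have "(\<forall>k\<in>{1..Suc n}. (x(Suc n := y)) k \<le> r) \<longleftrightarrow> (\<forall>k\<in>{1..n}. x k \<le> r) \<and> y \<le> r"
    by (auto simp: le_Suc_eq)
  ultimately show ?thesis
    using assms by (auto simp: bounded_sum_event_def)
qed

lemma emeasure_bounded_sum_event_Suc:
  assumes "sigma_finite_measure D" and sets_D: "sets D = sets borel"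
  shows "emeasure (\<Pi>\<^sub>M k\<in>{1..Suc n}. D) (bounded_sum_event r (Suc n) t) =
    (\<integral>\<^sup>+ y. indicator {..r} y * emeasure (\<Pi>\<^sub>M k\<in>{1..n}. D) (bounded_sum_event r n (t - y)) \<partial>D)"
proof -
  interpret product_sigma_finite "\<lambda>_. D"
    using assms(1) by (simp add: product_sigma_finite_def)
  have insert_Suc: "{1..Suc n} = insert (Suc n) {1..n}"
    by auto
  have space_D: "space D = UNIV"
    using sets_eq_imp_space_eq[OF sets_D] by simp
  have "emeasure (\<Pi>\<^sub>M k\<in>{1..Suc n}. D) (bounded_sum_event r (Suc n) t) =
      (\<integral>\<^sup>+ x. indicator (bounded_sum_event r (Suc n) t) x \<partial>(\<Pi>\<^sub>M k\<in>insert (Suc n) {1..n}. D))"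
    unfolding insert_Suc[symmetric]
    by (rule nn_integral_indicator[symmetric, OF bounded_sum_event_in_sets[OF sets_D]])
  also have "\<dots> = (\<integral>\<^sup>+ y. (\<integral>\<^sup>+ x. indicator (bounded_sum_event r (Suc n) t) (x(Suc n := y))
      \<partial>(\<Pi>\<^sub>M k\<in>{1..n}. D)) \<partial>D)"
  proof (rule product_nn_integral_insert_rev)
    show "indicator (bounded_sum_event r (Suc n) t) \<in> borel_measurable (\<Pi>\<^sub>M k\<in>insert (Suc n) {1..n}. D)"
      unfolding insert_Suc[symmetric] using bounded_sum_event_in_sets[OF sets_D] by simp
  qed auto
  also have "\<dots> = (\<integral>\<^sup>+ y. (\<integral>\<^sup>+ x. indicator {..r} y * indicator (bounded_sum_event r n (t - y)) x
      \<partial>(\<Pi>\<^sub>M k\<in>{1..n}. D)) \<partial>D)"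
    by (intro nn_integral_cong)
       (simp add: fun_upd_in_bounded_sum_event_Suc space_PiM space_D split: split_indicator)
  also have "\<dots> = (\<integral>\<^sup>+ y. indicator {..r} y * emeasure (\<Pi>\<^sub>M k\<in>{1..n}. D) (bounded_sum_event r n (t - y)) \<partial>D)"
    using bounded_sum_event_in_sets[OF sets_D] by (simp add: nn_integral_cmult_indicator)
  finally show ?thesis .
qed

lemma nn_integral_convolution_atMost:
  fixes f h :: "real \<Rightarrow> ennreal"
  assumes [measurable]: "f \<in> borel_measurable borel" "h \<in> borel_measurable borel"
  shows "(\<integral>\<^sup>+ y. f y * (\<integral>\<^sup>+ z. h z * indicator {..t - y} z \<partial>lborel) \<partial>lborel)
       = (\<integral>\<^sup>+ w. (\<integral>\<^sup>+ y. f y * h (w - y) \<partial>lborel) * indicator {..t} w \<partial>lborel)"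
proof -
  have shift: "(\<integral>\<^sup>+ z. h z * indicator {..t - y} z \<partial>lborel)
             = (\<integral>\<^sup>+ w. h (w - y) * indicator {..t} w \<partial>lborel)" for y
    using nn_integral_real_affine[of "\<lambda>z. h z * indicator {..t - y} z" 1 "- y"]
    by (simp add: indicator_def)
  have "(\<integral>\<^sup>+ y. f y * (\<integral>\<^sup>+ z. h z * indicator {..t - y} z \<partial>lborel) \<partial>lborel)
      = (\<integral>\<^sup>+ y. (\<integral>\<^sup>+ w. f y * h (w - y) * indicator {..t} w \<partial>lborel) \<partial>lborel)"
    by (simp add: shift nn_integral_cmult[symmetric] mult.assoc)
  also have "\<dots> = (\<integral>\<^sup>+ w. (\<integral>\<^sup>+ y. f y * h (w - y) * indicator {..t} w \<partial>lborel) \<partial>lborel)"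
    by (rule lborel_pair.Fubini') measurable
  also have "\<dots> = (\<integral>\<^sup>+ w. (\<integral>\<^sup>+ y. f y * h (w - y) \<partial>lborel) * indicator {..t} w \<partial>lborel)"
    by (simp add: nn_integral_multc)
  finally show ?thesis .
qed

definition bounded_sum_density :: "real \<Rightarrow> real \<Rightarrow> nat \<Rightarrow> real \<Rightarrow> real" where
  "bounded_sum_density l r n z = l ^ n * exp (- l * z) * bspline r n z"

lemma borel_measurable_bounded_sum_density[measurable]:
  "bounded_sum_density l r n \<in> borel_measurable borel"
  unfolding bounded_sum_density_def[abs_def] by measurable

lemma nn_integral_bounded_sum_density_Suc:
  assumes "0 \<le> l" "0 \<le> r" "n \<ge> 1"
  shows "(\<integral>\<^sup>+ y. (ennreal (exponential_density l y) * indicator {..r} y) *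
                 ennreal (bounded_sum_density l r n (w - y)) \<partial>lborel)
       = ennreal (bounded_sum_density l r (Suc n) w)"
proof -
  have "(\<integral>\<^sup>+ y. (ennreal (exponential_density l y) * indicator {..r} y) *
                 ennreal (bounded_sum_density l r n (w - y)) \<partial>lborel)
      = (\<integral>\<^sup>+ y. ennreal (l ^ Suc n * exp (- l * w) * bspline r n (w - y)) * indicator {0..r} y \<partial>lborel)"
  proof (intro nn_integral_cong)
    fix y :: real
    have "exp (- y * l) * exp (- l * (w - y)) = exp (- l * w)"
      by (simp add: exp_add[symmetric] algebra_simps)
    then show "(ennreal (exponential_density l y) * indicator {..r} y) *
                 ennreal (bounded_sum_density l r n (w - y))
        = ennreal (l ^ Suc n * exp (- l * w) * bspline r n (w - y)) * indicator {0..r} y"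
      using assms bspline_nonneg[of r n "w - y"]
      by (auto simp: exponential_density_def bounded_sum_density_def indicator_def
            ennreal_mult'[symmetric] algebra_simps)
  qed
  also have "\<dots> = ennreal (l ^ Suc n * exp (- l * w) * bspline r (Suc n) w)"
    using assms
    by (intro nn_integral_has_integral_lebesgue' has_integral_mult_right has_integral_bspline)
       (auto simp: bspline_nonneg)
  finally show ?thesis
    by (simp add: bounded_sum_density_def)
qed

lemma sigma_finite_exponential_density: "0 < l \<Longrightarrow> sigma_finite_measure (density lborel (exponential_density l))"
  using prob_space_exponential_density prob_space_imp_sigma_finite by blast

lemma emeasure_bounded_sum_event_one:
  assumes "0 < l" "0 \<le> r"
  shows "emeasure (\<Pi>\<^sub>M k\<in>{1..1}. density lborel (exponential_density l)) (bounded_sum_event r 1 t)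
       = (\<integral>\<^sup>+ z. ennreal (bounded_sum_density l r 1 z) * indicator {..t} z \<partial>lborel)"
proof -
  let ?E = "density lborel (exponential_density l)"
  have "emeasure (\<Pi>\<^sub>M k\<in>{1..0}. ?E) (bounded_sum_event r 0 s) = indicator {0..} s" for s
    by (auto simp: bounded_sum_event_def indicator_def)
  then have "emeasure (\<Pi>\<^sub>M k\<in>{1..1}. ?E) (bounded_sum_event r 1 t)
      = (\<integral>\<^sup>+ y. indicator {..r} y * indicator {..t} y \<partial>?E)"
    using emeasure_bounded_sum_event_Suc[OF sigma_finite_exponential_density[OF assms(1)], of 0 r t]
    by (simp add: indicator_def)
  also have "\<dots> = (\<integral>\<^sup>+ y. ennreal (exponential_density l y) * (indicator {..r} y * indicator {..t} y) \<partial>lborel)"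
    by (rule nn_integral_density) measurable
  also have "\<dots> = (\<integral>\<^sup>+ z. ennreal (bounded_sum_density l r 1 z) * indicator {..t} z \<partial>lborel)"
  proof (rule nn_integral_cong_AE)
    show "AE y in lborel. ennreal (exponential_density l y) * (indicator {..r} y * indicator {..t} y)
       = ennreal (bounded_sum_density l r 1 y) * indicator {..t} y"
      using AE_lborel_singleton[of r]
      by eventually_elim
         (use assms bspline_one[OF assms(2)] in
           \<open>auto simp: bounded_sum_density_def exponential_density_def
                          indicator_def algebra_simps\<close>)
  qed
  finally show ?thesis .
qed

lemma emeasure_bounded_sum_event:
  assumes "0 < l" "0 \<le> r" "n \<ge> 1"
  shows "emeasure (\<Pi>\<^sub>M k\<in>{1..n}. density lborel (exponential_density l)) (bounded_sum_event r n t)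
       = (\<integral>\<^sup>+ z. ennreal (bounded_sum_density l r n z) * indicator {..t} z \<partial>lborel)"
  using assms(3)
proof (induction n arbitrary: t rule: dec_induct)
  case base
  show ?case
    by (rule emeasure_bounded_sum_event_one[OF assms(1,2)])
next
  case (step n)
  let ?E = "density lborel (exponential_density l)"
  let ?f = "\<lambda>y. ennreal (exponential_density l y) * indicator {..r} y"
  have "emeasure (\<Pi>\<^sub>M k\<in>{1..Suc n}. ?E) (bounded_sum_event r (Suc n) t)
      = (\<integral>\<^sup>+ y. indicator {..r} y *
           (\<integral>\<^sup>+ z. ennreal (bounded_sum_density l r n z) * indicator {..t - y} z \<partial>lborel) \<partial>?E)"
    by (simp only: emeasure_bounded_sum_event_Suc[OF sigma_finite_exponential_density[OF assms(1)]]
          sets_density sets_lborel step.IH)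
  also have "\<dots> = (\<integral>\<^sup>+ y. ?f y *
           (\<integral>\<^sup>+ z. ennreal (bounded_sum_density l r n z) * indicator {..t - y} z \<partial>lborel) \<partial>lborel)"
  proof -
    have [measurable]: "Measurable.pred (borel \<Otimes>\<^sub>M borel) (\<lambda>x::real \<times> real. snd x \<in> {..t - fst x})"
      unfolding atMost_iff by measurable
    show ?thesis
      by (subst nn_integral_density) (measurable, simp add: mult.assoc)
  qed
  also have "\<dots> = (\<integral>\<^sup>+ w. (\<integral>\<^sup>+ y. ?f y * ennreal (bounded_sum_density l r n (w - y)) \<partial>lborel)
                      * indicator {..t} w \<partial>lborel)"
    by (rule nn_integral_convolution_atMost) measurable
  also have "\<dots> = (\<integral>\<^sup>+ w. ennreal (bounded_sum_density l r (Suc n) w) * indicator {..t} w \<partial>lborel)"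
    using assms step.hyps by (simp add: nn_integral_bounded_sum_density_Suc)
  finally show ?case .
qed

lemma bounded_sum_density_eq_erlang:
  assumes "n \<ge> 1"
  shows "bounded_sum_density l r n z = (\<Sum>i\<le>n. (-1)^i * real (n choose i) *
           exp (- l * (real i * r)) * erlang_density (n - 1) l (z - real i * r))"
  unfolding bounded_sum_density_def bspline_def sum_divide_distrib sum_distrib_left
proof (intro sum.cong refl)
  fix i
  have "exp (- l * z) = exp (- l * (real i * r)) * exp (- l * (z - real i * r))"
    by (simp add: exp_add[symmetric] algebra_simps)
  then show "l ^ n * exp (- l * z) *
      ((-1)^i * real (n choose i) * trunc_power (n - 1) (z - real i * r) / fact (n - 1))
    = (-1)^i * real (n choose i) * exp (- l * (real i * r)) * erlang_density (n - 1) l (z - real i * r)"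
    using assms by (simp add: erlang_density_def trunc_power_def field_simps)
qed

lemma has_bochner_integral_erlang_density_shift:
  assumes "0 < l"
  shows "has_bochner_integral lborel (\<lambda>z. erlang_density k l (z - c) * indicator {..t} z)
           (erlang_CDF k l (t - c))"
proof (rule has_bochner_integral_nn_integral)
  have "(\<integral>\<^sup>+ x. ennreal (erlang_density k l x) * indicator {..t - c} x \<partial>lborel)
      = (\<integral>\<^sup>+ z. ennreal (erlang_density k l (z - c)) * indicator {..t - c} (z - c) \<partial>lborel)"
    using nn_integral_real_affine[of "\<lambda>x. ennreal (erlang_density k l x) * indicator {..t - c} x" 1 "- c"]
    by simp
  also have "\<dots> = (\<integral>\<^sup>+ z. ennreal (erlang_density k l (z - c) * indicator {..t} z) \<partial>lborel)"
    by (intro nn_integral_cong) (simp add: indicator_def)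
  finally show "(\<integral>\<^sup>+ z. ennreal (erlang_density k l (z - c) * indicator {..t} z) \<partial>lborel)
      = ennreal (erlang_CDF k l (t - c))"
    using nn_integral_erlang_density[OF assms, of k "t - c"] by simp
qed (use assms in auto)

lemma measure_bounded_sum_event:
  assumes "0 < l" "0 \<le> r" "n \<ge> 1"
  shows "measure (\<Pi>\<^sub>M k\<in>{1..n}. density lborel (exponential_density l)) (bounded_sum_event r n t)
       = (\<Sum>i\<le>n. (-1)^i * real (n choose i) * exp (- l * (real i * r)) *
            erlang_CDF (n - 1) l (t - real i * r))"
proof -
  have "has_bochner_integral lborel
      (\<lambda>z. \<Sum>i\<le>n. ((-1)^i * real (n choose i) * exp (- l * (real i * r))) *
              (erlang_density (n - 1) l (z - real i * r) * indicator {..t} z))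
      (\<Sum>i\<le>n. ((-1)^i * real (n choose i) * exp (- l * (real i * r))) *
              erlang_CDF (n - 1) l (t - real i * r))"
    by (intro has_bochner_integral_sum has_bochner_integral_mult_right
          has_bochner_integral_erlang_density_shift assms(1))
  then have "(\<integral>z. bounded_sum_density l r n z * indicator {..t} z \<partial>lborel)
      = (\<Sum>i\<le>n. (-1)^i * real (n choose i) * exp (- l * (real i * r)) *
            erlang_CDF (n - 1) l (t - real i * r))"
    by (simp add: has_bochner_integral_integral_eq bounded_sum_density_eq_erlang[OF assms(3)]
          sum_distrib_right mult.assoc)
  moreover have "enn2real (\<integral>\<^sup>+ z. ennreal (bounded_sum_density l r n z) * indicator {..t} z \<partial>lborel)
      = (\<integral>z. bounded_sum_density l r n z * indicator {..t} z \<partial>lborel)"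
    using assms
    by (intro enn2real_nn_integral_eq_integral AE_I2)
       (auto simp: indicator_def bounded_sum_density_def bspline_nonneg)
  ultimately show ?thesis
    unfolding measure_def emeasure_bounded_sum_event[OF assms] by simp
qed

lemma erlang_CDF_eq_exp_tail:
  assumes "0 \<le> s"
  shows "erlang_CDF k l s = exp (- l * s) * (\<Sum>m. (l * s) ^ (m + Suc k) / fact (m + Suc k))"
proof -
  define x where "x = l * s"
  have "(\<lambda>m. x ^ m / fact m) sums exp x"
    using exp_converges[of x] by (simp add: divide_inverse mult.commute)
  from sums_split_initial_segment[OF this, of "Suc k"]
  have tail: "(\<Sum>m. x ^ (m + Suc k) / fact (m + Suc k)) = exp x - (\<Sum>m\<le>k. x ^ m / fact m)"
    by (simp add: sums_iff lessThan_Suc_atMost)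
  have "exp (- x) * exp x = 1"
    by (simp flip: exp_add)
  then have "erlang_CDF k l s = exp (- x) * (exp x - (\<Sum>m\<le>k. x ^ m / fact m))"
    using assms by (simp add: erlang_CDF_def x_def right_diff_distrib sum_distrib_left mult_ac)
  also have "\<dots> = exp (- x) * (\<Sum>m. x ^ (m + Suc k) / fact (m + Suc k))"
    by (simp only: tail)
  finally show ?thesis
    by (simp only: x_def mult_minus_left)
qed

lemma alternating_erlang_CDF_sum:
  assumes "0 < r" "real j * r \<le> t" "t < (real j + 1) * r"
  shows "(\<Sum>i\<le>n. (-1)^i * real (n choose i) * exp (- l * (real i * r)) * erlang_CDF k l (t - real i * r))
    = exp (- l * t) * (\<Sum>i=0..j. (-1)^i * real (n choose i) *
        (\<Sum>m. (l * (t - real i * r)) ^ (m + Suc k) / fact (m + Suc k)))"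
proof -
  define b where "b i = (-1)^i * real (n choose i) * exp (- l * (real i * r)) *
    erlang_CDF k l (t - real i * r)" for i
  have b_vanishes: "b i = 0" if "j < i" for i
  proof -
    have "(real j + 1) * r \<le> real i * r"
      using that assms(1) by (intro mult_right_mono) auto
    then show ?thesis
      using assms(3) by (simp add: b_def erlang_CDF_def)
  qed
  have b_eq: "b i = exp (- l * t) * ((-1)^i * real (n choose i) *
      (\<Sum>m. (l * (t - real i * r)) ^ (m + Suc k) / fact (m + Suc k)))" if "i \<le> j" for i
  proof -
    have "real i * r \<le> real j * r"
      using that assms(1) by (intro mult_right_mono) auto
    moreover have "exp (- l * (real i * r)) * exp (- l * (t - real i * r)) = exp (- l * t)"
      by (simp add: exp_add[symmetric] algebra_simps)
    ultimately show ?thesis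
      using assms(2) by (simp add: b_def erlang_CDF_eq_exp_tail algebra_simps)
  qed
  have "(\<Sum>i\<le>n. b i) = (\<Sum>i\<le>n + j. b i)"
    by (rule sum.mono_neutral_left) (auto simp: b_def)
  also have "\<dots> = (\<Sum>i=0..j. b i)"
    by (rule sum.mono_neutral_right) (auto simp: b_vanishes)
  also have "\<dots> = exp (- l * t) * (\<Sum>i=0..j. (-1)^i * real (n choose i) *
        (\<Sum>m. (l * (t - real i * r)) ^ (m + Suc k) / fact (m + Suc k)))"
    by (simp add: b_eq sum_distrib_left)
  finally show ?thesis
    unfolding b_def .
qed

lemma (in prob_space) emeasure_indep_identically_distributed:
  fixes X :: "'i \<Rightarrow> 'a \<Rightarrow> 'b::topological_space"
  assumes indep: "indep_vars (\<lambda>_. borel) X I" and "I \<noteq> {}"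
    and distr_X: "\<And>i. i \<in> I \<Longrightarrow> distr M borel (X i) = D"
    and A: "A \<in> sets (\<Pi>\<^sub>M i\<in>I. borel)"
  shows "emeasure M {\<omega> \<in> space M. (\<lambda>i\<in>I. X i \<omega>) \<in> A} = emeasure (\<Pi>\<^sub>M i\<in>I. D) A"
proof -
  have rv: "\<And>i. i \<in> I \<Longrightarrow> random_variable borel (X i)"
    using indep by (simp add: indep_vars_def)
  then have joint: "(\<lambda>\<omega>. \<lambda>i\<in>I. X i \<omega>) \<in> measurable M (\<Pi>\<^sub>M i\<in>I. borel)"
    by (rule measurable_restrict)
  have "distr M (\<Pi>\<^sub>M i\<in>I. borel) (\<lambda>\<omega>. \<lambda>i\<in>I. X i \<omega>) = (\<Pi>\<^sub>M i\<in>I. distr M borel (X i))"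
    using indep indep_vars_iff_distr_eq_PiM'[OF \<open>I \<noteq> {}\<close> rv] by simp
  also have "\<dots> = (\<Pi>\<^sub>M i\<in>I. D)"
    by (rule PiM_cong) (simp_all add: distr_X)
  finally have "emeasure (\<Pi>\<^sub>M i\<in>I. D) A = emeasure M ((\<lambda>\<omega>. \<lambda>i\<in>I. X i \<omega>) -` A \<inter> space M)"
    using emeasure_distr[OF joint A] by simp
  then show ?thesis
    by (simp add: Int_def conj_commute)
qed

theorem lemma1:
  fixes M :: "'a measure" and X :: "nat \<Rightarrow> 'a \<Rightarrow> real"
    and l r t :: real and n j :: nat
  assumes "prob_space M"
    and "prob_space.indep_vars M (\<lambda>_. borel) X {1..}"
    and "\<And>k. k \<ge> 1 \<Longrightarrow> distributed M lborel (X k) (exponential_density l)"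
    and "l > 0" and "r > 0"
    and "n \<ge> 1"
    and "real j * r \<le> t" and "t < (real j + 1) * r"
  shows "measure M {\<omega> \<in> space M. (\<Sum>k=1..n. X k \<omega>) \<le> t \<and> (\<forall>k\<in>{1..n}. X k \<omega> \<le> r)}
    = exp (- l * t) * (\<Sum>i=0..j. (-1) ^ i * real (n choose i) *
        (\<Sum>k. (l * (t - real i * r)) ^ (k + n) / fact (k + n)))"
proof -
  interpret prob_space M by (rule assms(1))
  let ?E = "density lborel (exponential_density l)"
  have distr_X: "distr M borel (X k) = ?E" if "k \<in> {1..n}" for k
    using distributed_distr_eq_density[OF assms(3)] that by (simp cong: distr_cong)
  have event: "{\<omega> \<in> space M. (\<Sum>k=1..n. X k \<omega>) \<le> t \<and> (\<forall>k\<in>{1..n}. X k \<omega> \<le> r)}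
      = {\<omega> \<in> space M. (\<lambda>k\<in>{1..n}. X k \<omega>) \<in> bounded_sum_event r n t}"
    by (auto simp: bounded_sum_event_def)
  have "measure M {\<omega> \<in> space M. (\<Sum>k=1..n. X k \<omega>) \<le> t \<and> (\<forall>k\<in>{1..n}. X k \<omega> \<le> r)}
      = measure (\<Pi>\<^sub>M k\<in>{1..n}. ?E) (bounded_sum_event r n t)"
    unfolding event measure_def
    using assms(6) distr_X bounded_sum_event_in_sets[of borel]
    by (subst emeasure_indep_identically_distributed[OF indep_vars_subset[OF assms(2)]]) auto
  also have "\<dots> = (\<Sum>i\<le>n. (-1)^i * real (n choose i) * exp (- l * (real i * r)) *
                    erlang_CDF (n - 1) l (t - real i * r))"
    using assms by (intro measure_bounded_sum_event) auto
  also have "\<dots> = exp (- l * t) * (\<Sum>i=0..j. (-1) ^ i * real (n choose i) *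
        (\<Sum>k. (l * (t - real i * r)) ^ (k + n) / fact (k + n)))"
    using alternating_erlang_CDF_sum[OF assms(5,7,8), of n l "n - 1"] assms(6) by simp
  finally show ?thesis .
qed

end
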